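(* Consider MPI ranks that invoke collective communication through a wrapper which first calls a trivial barrier (MPI\_Barrier() over the participating ranks) and then makes the original MPI collective communication call. For a given invocation of such a wrapper, at any moment one of the following four cases holds: (a) some MPI rank is in the collective communication call, and all other ranks are either in the call or have exited it; (b) some MPI rank is in the collective communication call, no rank has exited it, and every other rank has at least entered the trivial barrier (and possibly proceeded further); (c) some MPI rank is in the trivial barrier and no other rank has exited it (though some may not yet have entered the trivial barrier); (d) either no MPI rank has entered the trivial barrier, or all MPI ranks have exited the MPI collective communication call.
   Context: Events are ordered by Lamport's happens-before relation. Barrier axiom (assumed, applied to the trivial barrier and to the collective call viewed as a synchronization among all participants): for a given invocation of an MPI barrier, it never happens that a rank A exits the barrier before (under happens-before) another participating rank B enters that barrier. *)

theory Defs
  imports Main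
begin

(* Every participating rank r performs four events, each occurring at a time
   stamp in a linearly ordered time type 't:
     eb r  : r enters the trivial barrier
     xb r  : r exits  the trivial barrier
     ec r  : r enters the collective call
     xc r  : r exits  the collective call
   A "moment" is a time t; an event e has occurred at moment t iff e <= t. *)

definition happens_before :: "'t::linorder \<Rightarrow> 't \<Rightarrow> bool" where
  "happens_before e1 e2 \<longleftrightarrow> e1 < e2"

definition entered_barrier :: "('r \<Rightarrow> 't::linorder) \<Rightarrow> 't \<Rightarrow> 'r \<Rightarrow> bool" where
  "entered_barrier eb t r \<longleftrightarrow> eb r \<le> t"

definition exited_barrier :: "('r \<Rightarrow> 't::linorder) \<Rightarrow> 't \<Rightarrow> 'r \<Rightarrow> bool" where
  "exited_barrier xb t r \<longleftrightarrow> xb r \<le> t"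

definition in_barrier :: "('r \<Rightarrow> 't::linorder) \<Rightarrow> ('r \<Rightarrow> 't) \<Rightarrow> 't \<Rightarrow> 'r \<Rightarrow> bool" where
  "in_barrier eb xb t r \<longleftrightarrow> eb r \<le> t \<and> t < xb r"

(* After leaving the trivial barrier the wrapper proceeds directly into the
   collective call; the rank counts as being "in the collective call" from
   the moment it exits the barrier until it exits the collective call. *)
definition in_collective :: "('r \<Rightarrow> 't::linorder) \<Rightarrow> ('r \<Rightarrow> 't) \<Rightarrow> 't \<Rightarrow> 'r \<Rightarrow> bool" where
  "in_collective xb xc t r \<longleftrightarrow> xb r \<le> t \<and> t < xc r"

definition exited_collective :: "('r \<Rightarrow> 't::linorder) \<Rightarrow> 't \<Rightarrow> 'r \<Rightarrow> bool" where
  "exited_collective xc t r \<longleftrightarrow> xc r \<le> t"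

end

theory Submission
  imports Defs
begin

text \<open>The two synchronisations propagate progress from one rank to all others: once some rank has
  exited the trivial barrier, every rank has entered it, and once some rank has exited the
  collective call, every rank has entered the call and so has exited the barrier. A case split on
  whether some rank has exited the collective call, or else the barrier, then yields the four
  cases.\<close>

lemma entered_barrier_if_exited_barrier:
  assumes "\<forall>A\<in>R. \<forall>B\<in>R. \<not> happens_before (xb A) (eb B)"
    and "a \<in> R" "exited_barrier xb t a" "s \<in> R"
  shows "entered_barrier eb t s"
  using assms by (force simp: happens_before_def exited_barrier_def entered_barrier_def)

lemma exited_barrier_if_exited_collective:
  assumes "\<forall>r\<in>R. \<not> happens_before (ec r) (xb r)"
    and "\<forall>A\<in>R. \<forall>B\<in>R. \<not> happens_before (xc A) (ec B)"
    and "a \<in> R" "exited_collective xc t a" "s \<in> R"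
  shows "exited_barrier xb t s"
proof -
  have "xb s \<le> ec s" "ec s \<le> xc a"
    using assms by (auto simp: happens_before_def not_less)
  then show ?thesis
    using assms(4) by (simp add: exited_barrier_def exited_collective_def)
qed

lemma in_collective_iff:
  "in_collective xb xc t r \<longleftrightarrow> exited_barrier xb t r \<and> \<not> exited_collective xc t r"
  by (auto simp: in_collective_def exited_barrier_def exited_collective_def)

lemma in_barrier_iff:
  "in_barrier eb xb t r \<longleftrightarrow> entered_barrier eb t r \<and> \<not> exited_barrier xb t r"
  by (auto simp: in_barrier_def entered_barrier_def exited_barrier_def)

theorem lemma2:
  fixes R :: "'r set"
    and eb xb ec xc :: "'r \<Rightarrow> 't::linorder"
    and t :: 't
  assumes program_order:
      "\<forall>r\<in>R. happens_before (eb r) (xb r) \<and> \<not> happens_before (ec r) (xb r)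
               \<and> happens_before (ec r) (xc r)"
    and barrier_axiom: "\<forall>A\<in>R. \<forall>B\<in>R. \<not> happens_before (xb A) (eb B)"
    and collective_axiom: "\<forall>A\<in>R. \<forall>B\<in>R. \<not> happens_before (xc A) (ec B)"
  shows
    "(\<exists>r\<in>R. in_collective xb xc t r \<and>
        (\<forall>s\<in>R. s \<noteq> r \<longrightarrow> in_collective xb xc t s \<or> exited_collective xc t s))
   \<or> (\<exists>r\<in>R. in_collective xb xc t r \<and>
        (\<forall>s\<in>R. \<not> exited_collective xc t s) \<and>
        (\<forall>s\<in>R. s \<noteq> r \<longrightarrow> entered_barrier eb t s))
   \<or> (\<exists>r\<in>R. in_barrier eb xb t r \<and>
        (\<forall>s\<in>R. s \<noteq> r \<longrightarrow> \<not> exited_barrier xb t s))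
   \<or> ((\<forall>s\<in>R. \<not> entered_barrier eb t s) \<or> (\<forall>s\<in>R. exited_collective xc t s))"
proof -
  have ec_not_before_xb: "\<forall>r\<in>R. \<not> happens_before (ec r) (xb r)"
    using program_order by blast
  consider (collective_exited) a where "a \<in> R" "exited_collective xc t a"
    | (barrier_exited) r where "r \<in> R" "exited_barrier xb t r" "\<forall>s\<in>R. \<not> exited_collective xc t s"
    | (none_exited) "\<forall>s\<in>R. \<not> exited_barrier xb t s"
    by blast
  then show ?thesis
  proof cases
    case collective_exited
    then have "\<forall>s\<in>R. exited_barrier xb t s"
      using exited_barrier_if_exited_collective[OF ec_not_before_xb collective_axiom] by blast
    then show ?thesis
      by (auto simp: in_collective_iff)
  next
    case barrier_exited
    then show ?thesis
      using entered_barrier_if_exited_barrier[OF barrier_axiom] by (auto simp: in_collective_iff)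
  next
    case none_exited
    then show ?thesis
      by (auto simp: in_barrier_iff)
  qed
qed

end
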